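(* Fix $d\ge1$. There is a constant $C_0$ depending only on $d$ such that the following holds for all sufficiently large $n$. Let $P\subset B_\infty^d(1)$ with $|P|=n$ and let $\sigma:P\to\{-1,+1\}$ be any coloring. Let $w=\frac{1}{C_0\log^2 n}$ and $S_0=\mathrm{Grid}_d(w)\cap B_\infty^d(\sqrt{3\log n}+3)$. Then \[\sup_{x\in B_\infty^d(\sqrt{3\log n}+3)}\left|\sum_{p\in P}\sigma(p)e^{2\|p\|^2}e^{-\frac13\|x-3p\|^2}\right|\le 4\sup_{s\in S_0}\left|\sum_{p\in P}\sigma(p)e^{2\|p\|^2}e^{-\frac13\|s-3p\|^2}\right|+7.\]
   Context: $\log$ is the natural logarithm. $B_\infty^d(r)=\{x\in\mathbb{R}^d:|x_j|<r\text{ for all }j=1,\dots,d\}$. $\mathrm{Grid}_d(\gamma)=\{(\gamma i_1,\dots,\gamma i_d): i_1,\dots,i_d\in\mathbb{Z}\}$. $\|\cdot\|$ is the Euclidean norm. *)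

theory Defs
  imports "HOL-Analysis.Analysis"
begin

definition box_inf :: "real \<Rightarrow> (real ^ 'n) set" where
  "box_inf r = {x. \<forall>j. \<bar>x $ j\<bar> < r}"

definition grid :: "real \<Rightarrow> (real ^ 'n) set" where
  "grid \<gamma> = {x. \<exists>k :: 'n \<Rightarrow> int. \<forall>j. x $ j = \<gamma> * of_int (k j)}"

end

theory Submission
  imports Defs "HOL-Computational_Algebra.Polynomial"
begin

(* Let f be the signed Gaussian sum, F = |f|, and M the supremum of F over the box of radius
   R = sqrt (3 log n) + 3. Outside that box every term is at most e^(2d)/n, so F <= M + e^(2d)
   everywhere. Given x in the box, take a grid point s with |x - s| <= d w. Along the line through
   s and x, f is a combination of exponentials of quadratics in the line parameter; truncating their
   Taylor series after K ~ log n terms gives a polynomial of degree 2K within 1 of f on [-3, 3].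
   Lagrange interpolation at 2K + 1 equispaced nodes of spacing 1/K (a Markov-type inequality)
   bounds its derivative by 4 K^2 (M + e^(2d) + 1), so for w = 1/(C0 log^2 n) the mean value
   theorem gives F x <= F s + 5/2 + M/2. Taking suprema, M <= 2 sup F(S0) + 5. *)

lemma prod_lessThan_diff_eq_fact: "(\<Prod>j<k. real k - real j) = fact k"
proof (induction k)
  case 0 then show ?case by simp
next
  case (Suc k)
  have "(\<Prod>j<Suc k. real (Suc k) - real j) = real (Suc k) * (\<Prod>j<k. real (Suc k) - real (Suc j))"
    by (subst prod.lessThan_Suc_shift) simp
  also have "(\<Prod>j<k. real (Suc k) - real (Suc j)) = (\<Prod>j<k. real k - real j)" by simp
  finally show ?case using Suc by simp
qed

lemma prod_greaterThanAtMost_diff_eq_fact: "(\<Prod>j\<in>{k<..k+n}. real j - real k) = fact n"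
proof (induction n)
  case 0 then show ?case by simp
next
  case (Suc n)
  have "{k<..k+Suc n} = insert (k + Suc n) {k<..k+n}" by auto
  then show ?case using Suc by simp
qed

lemma prod_abs_diff_eq_fact_mult_fact:
  assumes "k \<le> N"
  shows "(\<Prod>j\<in>{0..N}-{k}. \<bar>real k - real j\<bar>) = fact k * fact (N - k)"
proof -
  have split: "{0..N}-{k} = {..<k} \<union> {k<..k+(N-k)}" using assms by auto
  have "(\<Prod>j\<in>{0..N}-{k}. \<bar>real k - real j\<bar>)
      = (\<Prod>j<k. \<bar>real k - real j\<bar>) * (\<Prod>j\<in>{k<..k+(N-k)}. \<bar>real k - real j\<bar>)"
    unfolding split by (rule prod.union_disjoint) auto
  also have "(\<Prod>j<k. \<bar>real k - real j\<bar>) = (\<Prod>j<k. real k - real j)"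
    by (rule prod.cong) auto
  also have "(\<Prod>j\<in>{k<..k+(N-k)}. \<bar>real k - real j\<bar>) = (\<Prod>j\<in>{k<..k+(N-k)}. real j - real k)"
    by (rule prod.cong) auto
  finally show ?thesis
    by (simp add: prod_lessThan_diff_eq_fact prod_greaterThanAtMost_diff_eq_fact)
qed

lemma fact_square_le_fact_mult_fact:
  assumes "k \<le> 2*m"
  shows "(fact m * fact m :: real) \<le> fact k * fact (2*m - k)"
proof -
  have k: "fact k * fact (2*m - k) * real ((2*m) choose k) = fact (2*m)"
    using binomial_fact_lemma[OF assms] by (metis of_nat_fact of_nat_mult)
  have m: "fact m * fact m * real ((2*m) choose m) = fact (2*m)"
    using binomial_fact_lemma[of m "2*m"]
    by (metis diff_le_self mult_2 add_diff_cancel_left' of_nat_fact of_nat_mult)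
  have "real ((2*m) choose k) \<le> real ((2*m) choose m)" using binomial_maximum'[of m k] by simp
  then have "fact m * fact m * real ((2*m) choose k) \<le> fact k * fact (2*m - k) * real ((2*m) choose k)"
    using k m by (metis fact_ge_zero mult_left_mono mult_nonneg_nonneg)
  moreover have "real ((2*m) choose k) > 0" using assms by simp
  ultimately show ?thesis by simp
qed

lemma prod_abs_diff_center_le:
  assumes "k \<le> 2*m" "k \<noteq> m"
  shows "(\<Prod>j\<in>{0..2*m}-{m}-{k}. \<bar>real m - real j\<bar>)
           \<le> \<bar>real k - real m\<bar> * (\<Prod>j\<in>{0..2*m}-{m}-{k}. \<bar>real k - real j\<bar>)"
proof -
  let ?J = "{0..2*m}-{m}-{k}"
  have "{0..2*m} - {k} = insert m ?J" using assms by auto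
  then have "\<bar>real k - real m\<bar> * (\<Prod>j\<in>?J. \<bar>real k - real j\<bar>) = fact k * fact (2*m - k)"
    using prod_abs_diff_eq_fact_mult_fact[OF assms(1)] by simp
  moreover have "\<bar>real m - real k\<bar> * (\<Prod>j\<in>?J. \<bar>real m - real j\<bar>) = fact m * fact m"
    using prod.remove[of "{0..2*m}-{m}" k "\<lambda>j. \<bar>real m - real j\<bar>"] assms
      prod_abs_diff_eq_fact_mult_fact[of m "2*m"] by simp
  moreover have "(\<Prod>j\<in>?J. \<bar>real m - real j\<bar>) \<le> \<bar>real m - real k\<bar> * (\<Prod>j\<in>?J. \<bar>real m - real j\<bar>)"
  proof -
    have "\<bar>real m - real k\<bar> \<ge> 1" using assms(2) by linarith
    moreover have "(\<Prod>j\<in>?J. \<bar>real m - real j\<bar>) \<ge> 0" by (simp add: prod_nonneg)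
    ultimately show ?thesis by (simp add: mult_le_cancel_right1)
  qed
  ultimately show ?thesis
    using fact_square_le_fact_mult_fact[OF assms(1)] by linarith
qed

lemma pderiv_sum: "pderiv (sum f A) = (\<Sum>x\<in>A. pderiv (f x))"
  using higher_pderiv_sum[of 1 f A] by simp

lemma poly_pderiv_0_by_interpolation:
  fixes R :: "real poly" and x :: "'a \<Rightarrow> real"
  assumes J: "finite J" "inj_on x J" "0 \<notin> x ` J"
    and deg: "degree R \<le> card J" and R0: "poly R 0 = 0"
  shows "poly (pderiv R) 0
           = (\<Sum>k\<in>J. poly R (x k) / (x k * (\<Prod>j\<in>J-{k}. x k - x j)) * (\<Prod>j\<in>J-{k}. - x j))"
proof -
  define D where "D k = x k * (\<Prod>j\<in>J-{k}. x k - x j)" for k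
  define Q where "Q k = [:0,1:] * (\<Prod>j\<in>J-{k}. [:- x j, 1:])" for k
  define L where "L = (\<Sum>k\<in>J. smult (poly R (x k) / D k) (Q k))"
  have D0: "D k \<noteq> 0" if "k \<in> J" for k
    using that J by (auto simp: D_def inj_on_eq_iff)
  have poly_Q: "poly (Q k) (x j) = (if j = k then D k else 0)" if "k \<in> J" "j \<in> J" for k j
  proof (cases "j = k")
    case False
    with that have "poly (\<Prod>i\<in>J-{k}. [:- x i, 1:]) (x j) = 0"
      unfolding poly_prod by (intro prod_zero) (use J in auto)
    with False show ?thesis by (simp add: Q_def)
  qed (simp add: Q_def D_def poly_prod)
  have "poly L (x j) = poly R (x j)" if "j \<in> J" for j
  proof -
    have "poly L (x j) = (\<Sum>k\<in>J. if k = j then poly R (x k) else 0)"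
      unfolding L_def poly_sum poly_smult by (rule sum.cong) (use poly_Q D0 that in auto)
    then show ?thesis using J(1) that by simp
  qed
  moreover have "poly L 0 = poly R 0" by (simp add: L_def Q_def poly_sum R0)
  ultimately have L_eq: "poly R y = poly L y" if "y \<in> insert 0 (x ` J)" for y
    using that by auto
  have "degree (Q k) \<le> card J" if "k \<in> J" for k
  proof -
    have "degree (\<Prod>j\<in>J-{k}. [:- x j, 1:]) \<le> (\<Sum>j\<in>J-{k}. degree [:- x j, 1:])"
      using degree_prod_sum_le[of "J-{k}" "\<lambda>j. [:- x j, 1:]"] J by (simp add: o_def)
    also have "\<dots> = card J - 1" using that J by simp
    finally have "degree (\<Prod>j\<in>J-{k}. [:- x j, 1:]) \<le> card J - 1" .
    moreover have "degree (Q k) \<le> degree [:0,1::real:] + degree (\<Prod>j\<in>J-{k}. [:- x j, 1:])"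
      unfolding Q_def by (rule degree_mult_le)
    moreover have "card J > 0" using that J(1) card_gt_0_iff by blast
    ultimately show ?thesis by simp
  qed
  then have "degree L \<le> card J" unfolding L_def
    by (intro degree_sum_le J(1)) (meson degree_smult_le order_trans)
  moreover have "card (insert 0 (x ` J)) = card J + 1"
    using J by (simp add: card_image)
  ultimately have "R = L"
    using deg by (intro poly_eqI_degree[of "insert 0 (x ` J)"] L_eq) auto
  have "poly (pderiv (Q k)) 0 = (\<Prod>j\<in>J-{k}. - x j)" for k
    by (simp add: Q_def pderiv_mult pderiv_pCons poly_prod)
  then have "poly (pderiv L) 0
      = (\<Sum>k\<in>J. poly R (x k) / (x k * (\<Prod>j\<in>J-{k}. x k - x j)) * (\<Prod>j\<in>J-{k}. - x j))"
    unfolding L_def D_def by (simp only: pderiv_sum pderiv_smult poly_sum poly_smult)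
  moreover have "pderiv R = pderiv L" using \<open>R = L\<close> by simp
  ultimately show ?thesis by simp
qed

(* The quotient is the derivative at the centre 0 of the Lagrange basis polynomial of the node
   x k for the nodes x 0, ..., x (2*m). *)
lemma abs_lagrange_weight_equispaced_le:
  fixes h :: real
  assumes h: "h > 0" and k: "k \<le> 2*m" "k \<noteq> m"
  defines "x \<equiv> \<lambda>j::nat. (real j - real m) * h" and "J \<equiv> {0..2*m} - {m}"
  shows "\<bar>(\<Prod>j\<in>J-{k}. - x j) / (x k * (\<Prod>j\<in>J-{k}. x k - x j))\<bar> \<le> 1/h"
proof -
  let ?c = "h ^ card (J - {k})"
  let ?a = "\<Prod>j\<in>J-{k}. \<bar>real m - real j\<bar>"
  let ?b = "\<bar>real k - real m\<bar> * (\<Prod>j\<in>J-{k}. \<bar>real k - real j\<bar>)"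
  have abs_x_diff: "\<bar>x i - x j\<bar> = h * \<bar>real i - real j\<bar>" for i j
    using h by (simp add: x_def abs_mult flip: left_diff_distrib)
  have "\<bar>\<Prod>j\<in>J-{k}. - x j\<bar> = (\<Prod>j\<in>J-{k}. h * \<bar>real m - real j\<bar>)"
    unfolding abs_prod by (rule prod.cong) (use h in \<open>auto simp: x_def abs_mult\<close>)
  then have num: "\<bar>\<Prod>j\<in>J-{k}. - x j\<bar> = ?c * ?a" by (simp add: prod.distrib)
  have "\<bar>x k * (\<Prod>j\<in>J-{k}. x k - x j)\<bar> = h * \<bar>real k - real m\<bar> * (\<Prod>j\<in>J-{k}. h * \<bar>real k - real j\<bar>)"
    unfolding abs_mult abs_prod
    by (intro arg_cong2[where f="(*)"] prod.cong) (use abs_x_diff[of _ m] abs_x_diff in \<open>auto simp: x_def\<close>)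
  then have den: "\<bar>x k * (\<Prod>j\<in>J-{k}. x k - x j)\<bar> = h * ?c * ?b" by (simp add: prod.distrib)
  have "?a \<le> ?b" using prod_abs_diff_center_le[OF k] by (simp add: J_def)
  moreover have "?b > 0" using k by (intro mult_pos_pos prod_pos) (auto simp: J_def)
  ultimately have "?a / ?b \<le> 1" by simp
  then have "?c * ?a / (h * ?c * ?b) \<le> 1/h" using h \<open>?b > 0\<close> by (simp add: field_simps)
  then show ?thesis by (simp add: abs_divide num den)
qed

lemma abs_poly_pderiv_0_le_equispaced:
  fixes R :: "real poly" and m :: nat and h M :: real
  assumes m: "m \<ge> 1" and h: "h > 0" and deg: "degree R \<le> 2*m" and R0: "poly R 0 = 0"
    and bnd: "\<And>k. k \<le> 2*m \<Longrightarrow> \<bar>poly R ((real k - real m) * h)\<bar> \<le> M"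
  shows "\<bar>poly (pderiv R) 0\<bar> \<le> 2*m*M/h"
proof -
  define x where "x k = (real k - real m) * h" for k :: nat
  define J where "J = {0..2*m} - {m}"
  have finJ: "finite J" by (simp add: J_def)
  have cardJ: "card J = 2*m" unfolding J_def using m by (subst card_Diff_singleton) auto
  have x0: "x k = 0 \<longleftrightarrow> k = m" for k using h by (auto simp: x_def)
  have "inj_on x J" using h by (auto simp: inj_on_def x_def)
  moreover have "0 \<notin> x ` J" unfolding J_def using x0 by (metis DiffE image_iff singletonI)
  ultimately have interp: "poly (pderiv R) 0
      = (\<Sum>k\<in>J. poly R (x k) / (x k * (\<Prod>j\<in>J-{k}. x k - x j)) * (\<Prod>j\<in>J-{k}. - x j))"
    using poly_pderiv_0_by_interpolation[OF finJ _ _ _ R0] deg cardJ by simp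
  have weight: "\<bar>(\<Prod>j\<in>J-{k}. - x j) / (x k * (\<Prod>j\<in>J-{k}. x k - x j))\<bar> \<le> 1/h"
    if "k \<in> J" for k
    using abs_lagrange_weight_equispaced_le[OF h, of k m] that unfolding x_def J_def by auto
  have "\<bar>poly (pderiv R) 0\<bar>
      \<le> (\<Sum>k\<in>J. \<bar>poly R (x k) / (x k * (\<Prod>j\<in>J-{k}. x k - x j)) * (\<Prod>j\<in>J-{k}. - x j)\<bar>)"
    unfolding interp by (rule sum_abs)
  also have "\<dots> \<le> (\<Sum>k\<in>J. M * (1/h))"
  proof (rule sum_mono)
    fix k assume k: "k \<in> J"
    have "\<bar>poly R (x k) / (x k * (\<Prod>j\<in>J-{k}. x k - x j)) * (\<Prod>j\<in>J-{k}. - x j)\<bar>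
        = \<bar>poly R (x k)\<bar> * \<bar>(\<Prod>j\<in>J-{k}. - x j) / (x k * (\<Prod>j\<in>J-{k}. x k - x j))\<bar>"
      by (simp only: abs_mult abs_divide times_divide_eq_left times_divide_eq_right mult.commute)
    also have "\<dots> \<le> M * (1/h)"
      using bnd[of k] k weight[OF k] by (intro mult_mono) (auto simp: J_def x_def)
    finally show "\<bar>poly R (x k) / (x k * (\<Prod>j\<in>J-{k}. x k - x j)) * (\<Prod>j\<in>J-{k}. - x j)\<bar> \<le> M * (1/h)" .
  qed
  also have "\<dots> = 2*m*M/h" using cardJ by simp
  finally show ?thesis .
qed

lemma abs_poly_pderiv_le_equispaced:
  fixes P :: "real poly" and m :: nat and h M t :: real
  assumes m: "m \<ge> 1" and h: "h > 0" and deg: "degree P \<le> 2*m"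
    and bnd: "\<And>k. k \<le> 2*m \<Longrightarrow> \<bar>poly P (t + (real k - real m) * h)\<bar> \<le> M"
  shows "\<bar>poly (pderiv P) t\<bar> \<le> 4*m*M/h"
proof -
  define R where "R = pcompose P [:t,1:] - [:poly P t:]"
  have poly_R: "poly R y = poly P (t + y) - poly P t" for y
    by (simp add: R_def poly_pcompose)
  have "degree R \<le> 2*m"
    using degree_pcompose_le[of P "[:t,1:]"] deg by (auto simp: R_def intro!: degree_diff_le)
  moreover have "\<bar>poly R ((real k - real m) * h)\<bar> \<le> 2*M" if "k \<le> 2*m" for k
    using bnd[OF that] bnd[of m] by (simp add: poly_R)
  ultimately have "\<bar>poly (pderiv R) 0\<bar> \<le> 2*m*(2*M)/h"
    by (intro abs_poly_pderiv_0_le_equispaced[OF m h]) (simp_all add: poly_R)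
  moreover have "poly (pderiv R) 0 = poly (pderiv P) t"
    by (simp add: R_def pderiv_diff pderiv_pcompose poly_pcompose pderiv_pCons)
  ultimately show ?thesis by simp
qed

lemma abs_diff_le_of_poly_approx:
  fixes P :: "real poly" and \<psi> :: "real \<Rightarrow> real" and K :: nat and \<delta> \<epsilon> M :: real
  assumes K: "K \<ge> 1" and deg: "degree P \<le> 2*K"
    and approx: "\<And>\<tau>. \<bar>\<tau>\<bar> \<le> 3 \<Longrightarrow> \<bar>\<psi> \<tau> - poly P \<tau>\<bar> \<le> \<epsilon>"
    and bounded: "\<And>\<tau>. \<bar>\<psi> \<tau>\<bar> \<le> M"
    and \<delta>: "0 < \<delta>" "\<delta> \<le> 1"
  shows "\<bar>\<psi> \<delta> - \<psi> 0\<bar> \<le> 2*\<epsilon> + \<delta> * (4 * K^2 * (M + \<epsilon>))"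
proof -
  obtain t where t: "0 < t" "t < \<delta>" "poly P \<delta> - poly P 0 = \<delta> * poly (pderiv P) t"
    using poly_MVT[of 0 \<delta> P] \<delta> by auto
  have "\<bar>poly P (t + (real k - real K) * (1/real K))\<bar> \<le> M + \<epsilon>" if "k \<le> 2*K" for k
  proof -
    let ?y = "t + (real k - real K) * (1/real K)"
    have "\<bar>(real k - real K) * (1/real K)\<bar> \<le> 1"
      using that K by (auto simp: abs_le_iff field_simps)
    then have "\<bar>?y\<bar> \<le> 3" using t \<delta> by linarith
    then show ?thesis using approx[of ?y] bounded[of ?y] by linarith
  qed
  then have "\<bar>poly (pderiv P) t\<bar> \<le> 4*K*(M+\<epsilon>)/(1/real K)"
    using K by (intro abs_poly_pderiv_le_equispaced[OF K _ deg]) auto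
  then have "\<bar>poly (pderiv P) t\<bar> \<le> 4 * K^2 * (M+\<epsilon>)" by (simp add: power2_eq_square mult_ac)
  then have "\<bar>poly P \<delta> - poly P 0\<bar> \<le> \<delta> * (4 * K^2 * (M+\<epsilon>))"
    using t(3) \<delta> by (simp add: abs_mult mult_left_mono)
  moreover have "\<bar>\<psi> \<delta> - poly P \<delta>\<bar> \<le> \<epsilon>" "\<bar>\<psi> 0 - poly P 0\<bar> \<le> \<epsilon>"
    using approx \<delta> by auto
  ultimately show ?thesis by linarith
qed

lemma abs_exp_minus_taylor_le:
  fixes y :: real
  shows "\<bar>exp y - (\<Sum>j<K. y^j / fact j)\<bar> \<le> \<bar>y\<bar>^K / fact K * exp \<bar>y\<bar>"
proof -
  obtain t where t: "\<bar>t\<bar> \<le> \<bar>y\<bar>" "exp y = (\<Sum>m<K. (y ^ m) / fact m) + (exp t / fact K) * y ^ K"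
    using Maclaurin_exp_le by blast
  have "\<bar>exp y - (\<Sum>j<K. y^j / fact j)\<bar> = exp t / fact K * \<bar>y\<bar>^K"
    using t(2) by (simp add: abs_mult power_abs)
  also have "\<dots> \<le> exp \<bar>y\<bar> / fact K * \<bar>y\<bar>^K"
    using t(1) by (intro mult_right_mono divide_right_mono) auto
  finally show ?thesis by (simp add: mult.commute)
qed

lemma power_self_div_fact_le_exp: "real K ^ K / fact K \<le> exp (real K)"
proof -
  obtain t where "exp (real K) = (\<Sum>m<Suc K. real K ^ m / fact m) + exp t / fact (Suc K) * real K ^ Suc K"
    using Maclaurin_exp_le by blast
  moreover have "real K ^ K / fact K \<le> (\<Sum>m<Suc K. real K ^ m / fact m)"
    by (rule member_le_sum) auto
  ultimately show ?thesis by simp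
qed

lemma abs_quadratic_exponent_le:
  fixes \<tau> b :: real
  assumes "\<bar>\<tau>\<bar> \<le> 3"
  shows "\<bar>-(2*\<tau>*b + \<tau>^2)/3\<bar> \<le> 2 * \<bar>b\<bar> + 3"
proof -
  have "\<bar>2*\<tau>*b + \<tau>^2\<bar> \<le> 2*\<bar>\<tau>\<bar>*\<bar>b\<bar> + \<tau>^2"
    using abs_triangle_ineq[of "2*\<tau>*b" "\<tau>^2"] by (simp add: abs_mult)
  moreover have "\<tau>^2 \<le> 3^2" using power_mono[OF assms abs_ge_zero, of 2] by simp
  moreover have "\<bar>\<tau>\<bar>*\<bar>b\<bar> \<le> 3*\<bar>b\<bar>" using assms by (simp add: mult_right_mono)
  ultimately show ?thesis by simp
qed

lemma exists_poly_approx_sum_exp_quadratic: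
  fixes S :: "'a set" and A b :: "'a \<Rightarrow> real" and K :: nat and B :: real
  assumes fin: "finite S" and B: "\<And>p. p \<in> S \<Longrightarrow> 2 * \<bar>b p\<bar> + 3 \<le> B"
  shows "\<exists>Q. degree Q \<le> 2*K \<and> (\<forall>\<tau>. \<bar>\<tau>\<bar> \<le> 3 \<longrightarrow>
     \<bar>(\<Sum>p\<in>S. A p * exp (-(2*\<tau>*b p + \<tau>^2)/3)) - poly Q \<tau>\<bar> \<le> (\<Sum>p\<in>S. \<bar>A p\<bar>) * (B^K / fact K * exp B))"
proof -
  define Y where "Y p = [:0, -2*b p/3, -1/3:]" for p
  define Q where "Q = (\<Sum>p\<in>S. smult (A p) (\<Sum>j<K. smult (1/fact j) (Y p ^ j)))"
  have poly_Y: "poly (Y p) \<tau> = -(2*\<tau>*b p + \<tau>^2)/3" for p \<tau>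
    by (simp add: Y_def algebra_simps power2_eq_square)
  have "degree (smult (1/fact j) (Y p ^ j)) \<le> 2*K" if "j < K" for p j
  proof -
    have "degree (smult (1/fact j) (Y p ^ j)) \<le> degree (Y p) * j"
      using degree_smult_le degree_power_le order_trans by blast
    also have "\<dots> \<le> 2*K" using that by (simp add: Y_def)
    finally show ?thesis .
  qed
  then have "degree Q \<le> 2*K" unfolding Q_def
    by (intro degree_sum_le fin order_trans[OF degree_smult_le]) auto
  moreover have "\<bar>(\<Sum>p\<in>S. A p * exp (-(2*\<tau>*b p + \<tau>^2)/3)) - poly Q \<tau>\<bar> \<le> (\<Sum>p\<in>S. \<bar>A p\<bar>) * (B^K / fact K * exp B)"
    if \<tau>: "\<bar>\<tau>\<bar> \<le> 3" for \<tau>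
  proof -
    define y where "y p = -(2*\<tau>*b p + \<tau>^2)/3" for p
    have "(\<Sum>p\<in>S. A p * exp (y p)) - poly Q \<tau> = (\<Sum>p\<in>S. A p * (exp (y p) - (\<Sum>j<K. y p ^ j / fact j)))"
      by (simp add: Q_def poly_sum poly_Y y_def sum_subtractf algebra_simps)
    also have "\<bar>\<dots>\<bar> \<le> (\<Sum>p\<in>S. \<bar>A p\<bar> * (B^K / fact K * exp B))"
    proof (rule order_trans[OF sum_abs], rule sum_mono)
      fix p assume p: "p \<in> S"
      have yB: "\<bar>y p\<bar> \<le> B" using abs_quadratic_exponent_le[OF \<tau>, of "b p"] B[OF p] by (simp add: y_def)
      have "\<bar>A p * (exp (y p) - (\<Sum>j<K. y p ^ j / fact j))\<bar> \<le> \<bar>A p\<bar> * (\<bar>y p\<bar>^K / fact K * exp \<bar>y p\<bar>)"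
        unfolding abs_mult by (intro mult_left_mono abs_exp_minus_taylor_le) simp
      also have "\<dots> \<le> \<bar>A p\<bar> * (B^K / fact K * exp B)"
        using yB by (intro mult_left_mono mult_mono divide_right_mono power_mono) auto
      finally show "\<bar>A p * (exp (y p) - (\<Sum>j<K. y p ^ j / fact j))\<bar> \<le> \<bar>A p\<bar> * (B^K / fact K * exp B)" .
    qed
    also have "\<dots> = (\<Sum>p\<in>S. \<bar>A p\<bar>) * (B^K / fact K * exp B)"
      by (rule sum_distrib_right[symmetric])
    finally show ?thesis unfolding y_def .
  qed
  ultimately show ?thesis by blast
qed

lemma exp_mult_taylor_remainder_le_1:
  fixes L B d :: real and K :: nat
  assumes L: "L \<ge> 1" and K: "real K \<ge> L" and B: "B > 0" and d: "d \<ge> 0"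
    and large: "exp 3 * B + 2*d \<le> L"
  shows "exp L * exp (2*d) * (B^K / fact K * exp B) \<le> 1"
proof -
  have Kpos: "real K > 0" using K L by linarith
  have "B^K / fact K = (B / real K)^K * (real K ^ K / fact K)"
    using Kpos by (simp add: power_divide)
  also have "\<dots> \<le> (B / real K)^K * exp (real K)"
    using power_self_div_fact_le_exp B Kpos by (intro mult_left_mono) auto
  also have "\<dots> = (exp 1 * B / real K)^K"
    by (simp add: power_divide power_mult_distrib exp_of_nat_mult[symmetric] field_simps)
  also have "\<dots> \<le> exp (-2) ^ K"
  proof -
    have "exp 3 * B \<le> real K" using large K B d by linarith
    then have "exp 1 * B / real K \<le> exp (-2)"
      using Kpos by (simp add: divide_le_eq exp_minus field_simps exp_add[symmetric])
    then show ?thesis using B Kpos by (intro power_mono) auto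
  qed
  also have "\<dots> = exp (-2 * real K)" by (simp add: exp_of_nat_mult[symmetric] mult.commute)
  also have "\<dots> \<le> exp (-2 * L)" using K by simp
  finally have remainder: "B^K / fact K \<le> exp (-2 * L)" .
  have "2*d + B \<le> L" using large B exp_ge_add_one_self[of 3] by (smt (verit) mult_le_cancel_right1)
  then have "exp (2*d) * exp B \<le> exp L" by (simp flip: exp_add)
  then have "exp L * (exp (2*d) * exp B) * (B^K / fact K) \<le> exp L * exp L * exp (-2 * L)"
    using remainder B by (intro mult_mono) auto
  then have "exp L * exp (2*d) * (B^K / fact K * exp B) \<le> exp L * exp L * exp (-2 * L)"
    by (simp add: ac_simps)
  also have "\<dots> = 1" by (simp flip: exp_add)
  finally show ?thesis .
qed

lemma power2_norm_cart: "(norm (x :: real^'n))^2 = (\<Sum>j\<in>UNIV. (x$j)^2)"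
  unfolding power2_norm_eq_inner inner_vec_def by (simp add: power2_eq_square)

lemma power2_norm_le_card_if_box_inf_1:
  assumes "p \<in> box_inf 1"
  shows "(norm (p :: real^'n))^2 \<le> real CARD('n)"
proof -
  have "(p$j)^2 \<le> 1" for j
  proof -
    have "\<bar>p$j\<bar> < 1" using assms by (simp add: box_inf_def)
    then have "\<bar>p$j\<bar>^2 \<le> 1^2" by (intro power_mono) auto
    then show ?thesis by simp
  qed
  then have "(\<Sum>j\<in>UNIV. (p$j)^2) \<le> (\<Sum>j\<in>(UNIV::'n set). 1)" by (intro sum_mono)
  then show ?thesis by (simp add: power2_norm_cart)
qed

lemma norm_le_card_mult_if_box_inf:
  assumes "p \<in> box_inf r"
  shows "norm (p :: real^'n) \<le> real CARD('n) * r"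
proof -
  have "norm p \<le> (\<Sum>j\<in>UNIV. \<bar>p$j\<bar>)" by (rule norm_le_l1_cart)
  also have "\<dots> \<le> (\<Sum>j\<in>(UNIV::'n set). r)"
    by (rule sum_mono) (use assms in \<open>auto simp: box_inf_def less_imp_le\<close>)
  finally show ?thesis by simp
qed

lemma exists_int_multiple_toward_zero:
  fixes t w :: real
  assumes w: "w > 0"
  shows "\<exists>k::int. \<bar>w * of_int k\<bar> \<le> \<bar>t\<bar> \<and> \<bar>t - w * of_int k\<bar> < w"
proof -
  define k where "k = \<lfloor>\<bar>t\<bar> / w\<rfloor>"
  have "of_int k \<le> \<bar>t\<bar> / w" "\<bar>t\<bar> / w < of_int k + 1" "0 \<le> k"
    using w by (simp_all add: k_def)
  then have k: "w * of_int k \<le> \<bar>t\<bar>" "\<bar>t\<bar> < w * of_int k + w" "0 \<le> w * of_int k"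
    using w by (simp_all add: pos_le_divide_eq pos_divide_less_eq algebra_simps)
  show ?thesis
  proof (cases "t \<ge> 0")
    case True
    with k show ?thesis by (intro exI[of _ k]) auto
  next
    case False
    with k show ?thesis by (intro exI[of _ "-k"]) auto
  qed
qed

lemma exists_grid_point_near:
  fixes x :: "real^'n"
  assumes w: "w > 0" and x: "x \<in> box_inf R"
  shows "\<exists>s. s \<in> grid w \<and> s \<in> box_inf R \<and> norm (x - s) \<le> real CARD('n) * w"
proof -
  have "\<forall>j. \<exists>k::int. \<bar>w * of_int k\<bar> \<le> \<bar>x$j\<bar> \<and> \<bar>x$j - w * of_int k\<bar> < w"
    using exists_int_multiple_toward_zero[OF w] by blast
  then obtain k :: "'n \<Rightarrow> int" where k: "\<And>j. \<bar>w * of_int (k j)\<bar> \<le> \<bar>x$j\<bar> \<and> \<bar>x$j - w * of_int (k j)\<bar> < w"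
    by metis
  define s :: "real^'n" where "s = (\<chi> j. w * of_int (k j))"
  have "s \<in> grid w" unfolding grid_def s_def by auto
  moreover have "s \<in> box_inf R" using x k by (auto simp: box_inf_def s_def intro: le_less_trans)
  moreover have "norm (x - s) \<le> (\<Sum>j\<in>UNIV. \<bar>(x - s)$j\<bar>)" by (rule norm_le_l1_cart)
  moreover have "\<dots> \<le> (\<Sum>j\<in>(UNIV::'n set). w)"
    using k by (intro sum_mono) (auto simp: s_def less_imp_le)
  ultimately show ?thesis by auto
qed

lemma power2_norm_add_scaleR_unit:
  fixes s u v :: "real^'n"
  assumes "norm u = 1"
  shows "(norm (s + \<tau> *\<^sub>R u - v))^2 = (norm (s - v))^2 + 2*\<tau>*(u \<bullet> (s - v)) + \<tau>^2"
proof -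
  have "s + \<tau> *\<^sub>R u - v = (s - v) + \<tau> *\<^sub>R u" by (simp add: algebra_simps)
  then have "(norm (s + \<tau> *\<^sub>R u - v))^2 = (norm ((s - v) + \<tau> *\<^sub>R u))^2" by (rule arg_cong)
  also have "\<dots> = (norm (s - v))^2 + 2 * ((s - v) \<bullet> (\<tau> *\<^sub>R u)) + (norm (\<tau> *\<^sub>R u))^2"
    using dot_norm[of "s - v" "\<tau> *\<^sub>R u"] by simp
  also have "\<dots> = (norm (s - v))^2 + 2*\<tau>*(u \<bullet> (s - v)) + \<tau>^2"
    using assms by (simp add: inner_commute power_mult_distrib)
  finally show ?thesis .
qed

definition gauss_sum :: "(real^'n) set \<Rightarrow> (real^'n \<Rightarrow> real) \<Rightarrow> real^'n \<Rightarrow> real" where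
  "gauss_sum P \<sigma> x = (\<Sum>p\<in>P. \<sigma> p * exp (2 * (norm p)\<^sup>2) * exp (- (1/3) * (norm (x - 3 *\<^sub>R p))\<^sup>2))"

lemma abs_gauss_sum_le:
  assumes signs: "\<forall>p\<in>P. \<sigma> p = -1 \<or> \<sigma> p = 1"
    and exponent: "\<And>p. p \<in> P \<Longrightarrow> 2 * (norm p)\<^sup>2 - (norm (y - 3 *\<^sub>R p))\<^sup>2 / 3 \<le> c"
  shows "\<bar>gauss_sum P \<sigma> y\<bar> \<le> card P * exp c"
proof -
  have "\<bar>gauss_sum P \<sigma> y\<bar> \<le> (\<Sum>p\<in>P. exp c)"
    unfolding gauss_sum_def
  proof (rule order_trans[OF sum_abs], rule sum_mono)
    fix p assume p: "p \<in> P"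
    have "\<bar>\<sigma> p\<bar> = 1" using signs p by auto
    then have "\<bar>\<sigma> p * exp (2 * (norm p)\<^sup>2) * exp (- (1/3) * (norm (y - 3 *\<^sub>R p))\<^sup>2)\<bar>
        = exp (2 * (norm p)\<^sup>2 - (norm (y - 3 *\<^sub>R p))\<^sup>2 / 3)"
      by (simp only: abs_mult abs_exp_cancel mult_1 flip: exp_add)
        (intro arg_cong[where f=exp], simp)
    also have "\<dots> \<le> exp c" using exponent[OF p] by simp
    finally show "\<bar>\<sigma> p * exp (2 * (norm p)\<^sup>2) * exp (- (1/3) * (norm (y - 3 *\<^sub>R p))\<^sup>2)\<bar> \<le> exp c" .
  qed
  then show ?thesis by simp
qed

lemma abs_gauss_sum_le_card_mult_exp:
  assumes "P \<subseteq> box_inf 1" "\<forall>p\<in>P. \<sigma> p = -1 \<or> \<sigma> p = 1"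
  shows "\<bar>gauss_sum P \<sigma> (y :: real^'n)\<bar> \<le> card P * exp (2 * real CARD('n))"
proof (rule abs_gauss_sum_le[OF assms(2)])
  fix p assume "p \<in> P"
  then have "(norm p)\<^sup>2 \<le> real CARD('n)" using assms(1) power2_norm_le_card_if_box_inf_1 by blast
  then show "2 * (norm p)\<^sup>2 - (norm (y - 3 *\<^sub>R p))\<^sup>2 / 3 \<le> 2 * real CARD('n)"
    using zero_le_power2[of "norm (y - 3 *\<^sub>R p)"] by linarith
qed

lemma abs_gauss_sum_outside_le:
  assumes "P \<subseteq> box_inf 1" "\<forall>p\<in>P. \<sigma> p = -1 \<or> \<sigma> p = 1"
    and L: "L \<ge> 0" and y: "(y :: real^'n) \<notin> box_inf (sqrt (3*L) + 3)"
  shows "\<bar>gauss_sum P \<sigma> y\<bar> \<le> card P * exp (2 * real CARD('n) - L)"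
proof (rule abs_gauss_sum_le[OF assms(2)])
  fix p assume "p \<in> P"
  then have p: "p \<in> box_inf 1" using assms(1) by blast
  obtain j where j: "\<bar>y$j\<bar> \<ge> sqrt (3*L) + 3" using y by (auto simp: box_inf_def not_less)
  have "\<bar>p$j\<bar> < 1" using p by (simp add: box_inf_def)
  then have "sqrt (3*L) \<le> \<bar>(y - 3 *\<^sub>R p)$j\<bar>" using j by auto
  also have "\<dots> \<le> norm (y - 3 *\<^sub>R p)" by (rule component_le_norm_cart)
  finally have "(sqrt (3*L))^2 \<le> (norm (y - 3 *\<^sub>R p))^2" using L by (intro power_mono) auto
  then show "2 * (norm p)\<^sup>2 - (norm (y - 3 *\<^sub>R p))\<^sup>2 / 3 \<le> 2 * real CARD('n) - L"
    using L power2_norm_le_card_if_box_inf_1[OF p] by simp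
qed

lemma bdd_above_abs_gauss_sum:
  assumes "P \<subseteq> box_inf 1" "\<forall>p\<in>P. \<sigma> p = -1 \<or> \<sigma> p = 1"
  shows "bdd_above ((\<lambda>x. \<bar>gauss_sum P \<sigma> (x :: real^'n)\<bar>) ` A)"
  using abs_gauss_sum_le_card_mult_exp[OF assms] by (intro bdd_aboveI2) auto

lemma abs_gauss_sum_le_SUP_box_inf:
  fixes P :: "(real^'n) set"
  assumes P: "P \<subseteq> box_inf 1" and signs: "\<forall>p\<in>P. \<sigma> p = -1 \<or> \<sigma> p = 1"
    and L: "L \<ge> 0" "card P \<le> exp L"
  shows "\<bar>gauss_sum P \<sigma> y\<bar> \<le> (SUP x\<in>box_inf (sqrt (3*L) + 3). \<bar>gauss_sum P \<sigma> x\<bar>) + exp (2 * real CARD('n))"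
proof -
  let ?M = "SUP x\<in>box_inf (sqrt (3*L) + 3). \<bar>gauss_sum P \<sigma> x\<bar>"
  have le_M: "\<bar>gauss_sum P \<sigma> x\<bar> \<le> ?M" if "x \<in> box_inf (sqrt (3*L) + 3)" for x
    using that bdd_above_abs_gauss_sum[OF P signs] by (rule cSUP_upper)
  have "0 \<in> box_inf (sqrt (3*L) + 3)" using L(1) by (simp add: box_inf_def add_nonneg_pos)
  then have "?M \<ge> 0" using le_M by (meson abs_ge_zero order_trans)
  show ?thesis
  proof (cases "y \<in> box_inf (sqrt (3*L) + 3)")
    case True
    then show ?thesis using le_M[OF True] exp_gt_zero[of "2 * real CARD('n)"] by linarith
  next
    case False
    then have "\<bar>gauss_sum P \<sigma> y\<bar> \<le> card P * exp (2 * real CARD('n) - L)"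
      using abs_gauss_sum_outside_le[OF P signs L(1)] by blast
    also have "\<dots> \<le> exp (2 * real CARD('n))"
      using L(2) by (simp add: exp_diff divide_le_eq mult.commute)
    finally show ?thesis using \<open>?M \<ge> 0\<close> by linarith
  qed
qed

lemma gauss_sum_on_line:
  fixes s u :: "real^'n"
  assumes u: "norm u = 1"
  shows "gauss_sum P \<sigma> (s + \<tau> *\<^sub>R u)
           = (\<Sum>p\<in>P. \<sigma> p * exp (2 * (norm p)\<^sup>2) * exp (- (1/3) * (norm (s - 3 *\<^sub>R p))\<^sup>2)
                  * exp (-(2*\<tau>*(u \<bullet> (s - 3 *\<^sub>R p)) + \<tau>^2)/3))"
  unfolding gauss_sum_def
proof (rule sum.cong[OF refl])
  fix p
  have "exp (- (1/3) * (norm (s + \<tau> *\<^sub>R u - 3 *\<^sub>R p))\<^sup>2)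
      = exp (- (1/3) * (norm (s - 3 *\<^sub>R p))\<^sup>2 + (-(2*\<tau>*(u \<bullet> (s - 3 *\<^sub>R p)) + \<tau>^2)/3))"
    unfolding power2_norm_add_scaleR_unit[OF u] by (simp add: algebra_simps)
  then show "\<sigma> p * exp (2 * (norm p)\<^sup>2) * exp (- (1/3) * (norm (s + \<tau> *\<^sub>R u - 3 *\<^sub>R p))\<^sup>2)
      = \<sigma> p * exp (2 * (norm p)\<^sup>2) * exp (- (1/3) * (norm (s - 3 *\<^sub>R p))\<^sup>2)
          * exp (-(2*\<tau>*(u \<bullet> (s - 3 *\<^sub>R p)) + \<tau>^2)/3)"
    by (simp only: exp_add mult.assoc)
qed

lemma abs_gauss_sum_diff_le:
  fixes P :: "(real^'n) set" and \<sigma> :: "real^'n \<Rightarrow> real"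
  defines "d \<equiv> real CARD('n)"
  assumes P: "finite P" "P \<subseteq> box_inf 1" and signs: "\<forall>p\<in>P. \<sigma> p = -1 \<or> \<sigma> p = 1"
    and K: "K \<ge> 1" and B: "B = 2 * (d * R + 3 * d) + 3"
    and eps: "card P * exp (2 * d) * (B^K / fact K * exp B) \<le> \<epsilon>"
    and bounded: "\<And>y. \<bar>gauss_sum P \<sigma> y\<bar> \<le> M"
    and s: "s \<in> box_inf R" and \<delta>: "0 < norm (x - s)" "norm (x - s) \<le> 1"
  shows "\<bar>gauss_sum P \<sigma> x - gauss_sum P \<sigma> s\<bar> \<le> 2*\<epsilon> + norm (x - s) * (4 * K^2 * (M + \<epsilon>))"
proof -
  define \<delta> where "\<delta> = norm (x - s)"
  define u where "u = (1/\<delta>) *\<^sub>R (x - s)"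
  have u: "norm u = 1" using \<delta> by (simp add: u_def \<delta>_def)
  have x: "x = s + \<delta> *\<^sub>R u" using \<delta> by (simp add: u_def \<delta>_def)
  define A where "A p = \<sigma> p * exp (2 * (norm p)\<^sup>2) * exp (- (1/3) * (norm (s - 3 *\<^sub>R p))\<^sup>2)" for p
  define b where "b p = u \<bullet> (s - 3 *\<^sub>R p)" for p
  define \<psi> where "\<psi> \<tau> = gauss_sum P \<sigma> (s + \<tau> *\<^sub>R u)" for \<tau>
  have \<psi>_eq: "\<psi> \<tau> = (\<Sum>p\<in>P. A p * exp (-(2*\<tau>*b p + \<tau>^2)/3))" for \<tau>
    unfolding \<psi>_def A_def b_def by (rule gauss_sum_on_line[OF u])
  have "2 * \<bar>b p\<bar> + 3 \<le> B" if p: "p \<in> P" for p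
  proof -
    have "\<bar>b p\<bar> \<le> norm u * norm (s - 3 *\<^sub>R p)" unfolding b_def by (rule Cauchy_Schwarz_ineq2)
    also have "\<dots> \<le> norm s + 3 * norm p" using u norm_triangle_ineq4[of s "3 *\<^sub>R p"] by simp
    also have "\<dots> \<le> d * R + 3 * d"
      using norm_le_card_mult_if_box_inf[OF s] norm_le_card_mult_if_box_inf[of p 1] p P(2)
      by (auto simp: d_def)
    finally show ?thesis using B by simp
  qed
  then obtain Q where Q: "degree Q \<le> 2*K" "\<And>\<tau>. \<bar>\<tau>\<bar> \<le> 3 \<Longrightarrow>
     \<bar>(\<Sum>p\<in>P. A p * exp (-(2*\<tau>*b p + \<tau>^2)/3)) - poly Q \<tau>\<bar> \<le> (\<Sum>p\<in>P. \<bar>A p\<bar>) * (B^K / fact K * exp B)"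
    using exists_poly_approx_sum_exp_quadratic[OF P(1)] by blast
  have "\<bar>A p\<bar> \<le> exp (2 * d)" if p: "p \<in> P" for p
  proof -
    have "\<bar>A p\<bar> = \<bar>gauss_sum {p} \<sigma> s\<bar>" by (simp add: A_def gauss_sum_def)
    also have "\<dots> \<le> exp (2 * d)"
      using abs_gauss_sum_le_card_mult_exp[of "{p}" \<sigma> s] p P(2) signs by (auto simp: d_def)
    finally show ?thesis .
  qed
  then have sum_A: "(\<Sum>p\<in>P. \<bar>A p\<bar>) \<le> card P * exp (2 * d)"
    using sum_mono[of P "\<lambda>p. \<bar>A p\<bar>" "\<lambda>_. exp (2 * d)"] by simp
  then have "(\<Sum>p\<in>P. \<bar>A p\<bar>) * (B^K / fact K * exp B) \<le> \<epsilon>"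
  proof -
    have "R > 0" using s unfolding box_inf_def by (metis abs_ge_zero le_less_trans mem_Collect_eq)
    then have "B \<ge> 0" using B by (simp add: d_def)
    then show ?thesis using sum_A by (intro order_trans[OF mult_right_mono eps]) auto
  qed
  then have approx: "\<bar>\<psi> \<tau> - poly Q \<tau>\<bar> \<le> \<epsilon>" if "\<bar>\<tau>\<bar> \<le> 3" for \<tau>
    using Q(2)[OF that] unfolding \<psi>_eq by linarith
  have "\<bar>\<psi> \<tau>\<bar> \<le> M" for \<tau> unfolding \<psi>_def by (rule bounded)
  then have "\<bar>\<psi> \<delta> - \<psi> 0\<bar> \<le> 2*\<epsilon> + \<delta> * (4 * K^2 * (M + \<epsilon>))"
    using \<delta> unfolding \<delta>_def by (intro abs_diff_le_of_poly_approx[OF K Q(1) approx])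
  moreover have "\<psi> \<delta> = gauss_sum P \<sigma> x" "\<psi> 0 = gauss_sum P \<sigma> s" using x by (simp_all add: \<psi>_def)
  ultimately show ?thesis by (simp add: \<delta>_def)
qed

lemma abs_gauss_sum_le_near:
  fixes P :: "(real^'n) set" and \<sigma> :: "real^'n \<Rightarrow> real"
  defines "d \<equiv> real CARD('n)"
  assumes P: "finite P" "P \<subseteq> box_inf 1" and signs: "\<forall>p\<in>P. \<sigma> p = -1 \<or> \<sigma> p = 1"
    and K: "K \<ge> 1" and B: "B = 2 * (d * R + 3 * d) + 3"
    and eps: "card P * exp (2 * d) * (B^K / fact K * exp B) \<le> 1"
    and bounded: "\<And>y. \<bar>gauss_sum P \<sigma> y\<bar> \<le> M + exp (2 * d)" and M: "M \<ge> 0"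
    and s: "s \<in> box_inf R"
    and near: "norm (x - s) \<le> 1" "norm (x - s) * (4 * real K ^ 2) \<le> 1 / (2 * (exp (2 * d) + 1))"
  shows "\<bar>gauss_sum P \<sigma> x\<bar> \<le> \<bar>gauss_sum P \<sigma> s\<bar> + 5/2 + M/2"
proof (cases "x = s")
  case False
  define \<eta> where "\<eta> = 1 / (2 * (exp (2 * d) + 1))"
  have "\<bar>gauss_sum P \<sigma> x - gauss_sum P \<sigma> s\<bar> \<le> 2*1 + norm (x - s) * (4 * real K ^ 2 * ((M + exp (2 * d)) + 1))"
    using False near(1) unfolding d_def
    by (intro abs_gauss_sum_diff_le[OF P signs K B[unfolded d_def] _ bounded[unfolded d_def] s])
      (use eps in \<open>auto simp: d_def\<close>)
  also have "\<dots> = 2 + (norm (x - s) * (4 * real K ^ 2)) * (M + (exp (2 * d) + 1))" by (simp add: algebra_simps)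
  also have "\<dots> \<le> 2 + \<eta> * (M + (exp (2 * d) + 1))"
    using near(2) M by (intro add_left_mono mult_right_mono) (auto simp: \<eta>_def)
  also have "\<dots> \<le> 2 + M/2 + 1/2"
  proof -
    have "0 < 2 + 2 * exp (d * 2)" by (simp add: add_pos_pos)
    then have "\<eta> \<le> 1/2" "\<eta> * (exp (2 * d) + 1) = 1/2" by (simp_all add: \<eta>_def field_simps)
    moreover have "\<eta> * M \<le> 1/2 * M" using \<open>\<eta> \<le> 1/2\<close> M by (rule mult_right_mono)
    ultimately show ?thesis by (simp only: distrib_left)
  qed
  finally show ?thesis by linarith
qed (use M in simp)

lemma taylor_error_le_1_if_log_large:
  fixes d :: real and n :: nat
  assumes d: "d \<ge> 0"
    and large: "exp 3 * 2 * d * sqrt 3 + exp 3 * (12 * d + 3) + 2 * d + 1 \<le> sqrt (ln n)"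
  defines "K \<equiv> nat \<lceil>ln n\<rceil>" and "B \<equiv> 2 * (d * (sqrt (3 * ln n) + 3) + 3 * d) + 3"
  shows "n * exp (2 * d) * (B^K / fact K * exp B) \<le> 1"
proof -
  define L where "L = ln n"
  have c: "0 \<le> exp 3 * 2 * d * sqrt 3" "0 \<le> exp 3 * (12 * d + 3) + 2 * d"
    using d by simp_all
  then have sqrt_L: "1 \<le> sqrt L" using large unfolding L_def by linarith
  then have L: "1 \<le> L" by simp
  then have "n > 0" by (cases "n = 0") (auto simp: L_def)
  then have n: "exp L = n" by (simp add: L_def)
  have "exp 3 * B + 2 * d = exp 3 * 2 * d * sqrt 3 * sqrt L + (exp 3 * (12 * d + 3) + 2 * d)"
    by (simp add: B_def L_def real_sqrt_mult algebra_simps)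
  also have "\<dots> \<le> (exp 3 * 2 * d * sqrt 3 + exp 3 * (12 * d + 3) + 2 * d) * sqrt L"
    using c sqrt_L mult_left_mono[OF sqrt_L c(2)] by (simp add: algebra_simps)
  also have "\<dots> \<le> sqrt L * sqrt L"
    using large L unfolding L_def by (intro mult_right_mono) (linarith, simp)
  also have "\<dots> = L" using L by simp
  finally have "exp 3 * B + 2 * d \<le> L" .
  moreover have "real K \<ge> L" unfolding K_def L_def by (rule real_nat_ceiling_ge)
  moreover have "B > 0" unfolding B_def using d L by (intro add_nonneg_pos) (auto simp: L_def)
  ultimately show ?thesis
    using exp_mult_taylor_remainder_le_1[OF L _ _ d] n by (simp add: L_def)
qed

lemma grid_spacing_le:
  fixes d L \<delta> :: real and K :: nat
  assumes d: "d \<ge> 1" and L: "L \<ge> 1" and K: "real K \<le> 2 * L"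
    and \<delta>: "0 \<le> \<delta>" "\<delta> \<le> d / (32 * d * (exp (2 * d) + 1) * L\<^sup>2)"
  shows "\<delta> \<le> 1" "\<delta> * (4 * real K ^ 2) \<le> 1 / (2 * (exp (2 * d) + 1))"
proof -
  have dw: "d / (32 * d * (exp (2 * d) + 1) * L\<^sup>2) = 1 / (32 * (exp (2 * d) + 1) * L\<^sup>2)"
    using d by simp
  have "32 * (exp (2 * d) + 1) * L\<^sup>2 \<ge> 1"
    using L by (smt (verit) exp_gt_zero mult_le_cancel_left1 one_le_power)
  then show "\<delta> \<le> 1" using \<delta> dw by (smt (verit) divide_le_eq_1)
  have K2: "4 * real K ^ 2 \<le> 16 * L\<^sup>2"
    using power_mono[OF K, of 2] by (simp add: power_mult_distrib)
  have "\<delta> * (4 * real K ^ 2) \<le> 1 / (32 * (exp (2 * d) + 1) * L\<^sup>2) * (16 * L\<^sup>2)"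
    by (rule mult_mono[OF _ K2]) (use \<delta> dw in auto)
  also have "\<dots> = 16 * L\<^sup>2 / (2 * (exp (2 * d) + 1) * (16 * L\<^sup>2))"
    by (simp add: ac_simps)
  also have "\<dots> = 1 / (2 * (exp (2 * d) + 1))"
    using L by (intro nonzero_divide_mult_cancel_right) simp
  finally show "\<delta> * (4 * real K ^ 2) \<le> 1 / (2 * (exp (2 * d) + 1))" .
qed

lemma SUP_abs_gauss_sum_le_grid:
  fixes P :: "(real^'n) set" and \<sigma> :: "real^'n \<Rightarrow> real"
  defines "d \<equiv> real CARD('n)"
  assumes P: "finite P" "P \<subseteq> box_inf 1" and signs: "\<forall>p\<in>P. \<sigma> p = -1 \<or> \<sigma> p = 1"
    and large: "exp 3 * 2 * d * sqrt 3 + exp 3 * (12 * d + 3) + 2 * d + 1 \<le> sqrt (ln (card P))"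
    and R: "R = sqrt (3 * ln (card P)) + 3"
    and w: "w = 1 / (32 * d * (exp (2 * d) + 1) * (ln (card P))\<^sup>2)"
  shows "(SUP x\<in>box_inf R. \<bar>gauss_sum P \<sigma> x\<bar>) \<le> 4 * (SUP s\<in>grid w \<inter> box_inf R. \<bar>gauss_sum P \<sigma> s\<bar>) + 7"
proof -
  define L where "L = ln (card P)"
  define K where "K = nat \<lceil>L\<rceil>"
  define M where "M = (SUP x\<in>box_inf R. \<bar>gauss_sum P \<sigma> x\<bar>)"
  define MS where "MS = (SUP s\<in>grid w \<inter> box_inf R. \<bar>gauss_sum P \<sigma> s\<bar>)"
  have d: "d \<ge> 1" by (simp add: d_def)
  have "1 \<le> sqrt L" using large d unfolding L_def by (smt (verit) mult_nonneg_nonneg exp_gt_zero real_sqrt_ge_zero)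
  then have L: "1 \<le> L" by simp
  then have "card P > 0" by (cases "card P = 0") (auto simp: L_def)
  then have card_P: "card P = exp L" by (simp add: L_def)
  have "real K = of_int \<lceil>L\<rceil>" using L by (simp add: K_def)
  then have K: "K \<ge> 1" "real K \<le> 2 * L"
    using L le_of_int_ceiling[of L] of_int_ceiling_le_add_one[of L] by linarith+
  have eps: "card P * exp (2 * d) * ((2 * (d * R + 3 * d) + 3)^K / fact K * exp (2 * (d * R + 3 * d) + 3)) \<le> 1"
    using taylor_error_le_1_if_log_large[OF _ large] d by (simp add: K_def L_def R)
  have bounded: "\<bar>gauss_sum P \<sigma> y\<bar> \<le> M + exp (2 * d)" for y
    using abs_gauss_sum_le_SUP_box_inf[OF P(2) signs, of L y] L card_P
    unfolding M_def R L_def[symmetric] d_def by simp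
  have "0 \<in> box_inf R" "0 \<in> grid w"
    using L by (auto simp: R box_inf_def grid_def L_def intro: exI[of _ "\<lambda>j. 0"] add_nonneg_pos)
  then have M: "M \<ge> 0" and MS: "MS \<ge> 0"
    unfolding M_def MS_def by (auto intro!: cSUP_upper2[OF bdd_above_abs_gauss_sum[OF P(2) signs]])
  have "\<bar>gauss_sum P \<sigma> x\<bar> \<le> MS + 5/2 + M/2" if x: "x \<in> box_inf R" for x
  proof -
    have "0 < 32 * d * (exp (2 * d) + 1) * L\<^sup>2" using d L by (intro mult_pos_pos add_pos_pos) auto
    then have "w > 0" by (simp add: w L_def[symmetric])
    then obtain s where s: "s \<in> grid w" "s \<in> box_inf R" "norm (x - s) \<le> d * w"
      using exists_grid_point_near[OF _ x] unfolding d_def by blast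
    then have "norm (x - s) \<le> 1" "norm (x - s) * (4 * real K ^ 2) \<le> 1 / (2 * (exp (2 * d) + 1))"
      using grid_spacing_le[OF d L K(2), of "norm (x - s)"] by (simp_all add: w L_def)
    then have "\<bar>gauss_sum P \<sigma> x\<bar> \<le> \<bar>gauss_sum P \<sigma> s\<bar> + 5/2 + M/2"
      using abs_gauss_sum_le_near[OF P signs K(1) refl eps[unfolded d_def]
          bounded[unfolded d_def] M s(2)] by (simp add: d_def)
    moreover have "\<bar>gauss_sum P \<sigma> s\<bar> \<le> MS"
      unfolding MS_def using s by (intro cSUP_upper2[OF bdd_above_abs_gauss_sum[OF P(2) signs]]) auto
    ultimately show ?thesis by linarith
  qed
  then have "M \<le> MS + 5/2 + M/2"
    unfolding M_def using \<open>0 \<in> box_inf R\<close> by (intro cSUP_least) (auto simp: M_def)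
  with MS show ?thesis unfolding M_def MS_def by linarith
qed

theorem lemma1:
  "\<exists>C0 :: real. C0 > 0 \<and> (\<exists>N :: nat. \<forall>n \<ge> N.
     \<forall>(P :: (real ^ 'n) set) (\<sigma> :: real ^ 'n \<Rightarrow> real).
       finite P \<and> card P = n \<and> P \<subseteq> box_inf 1 \<and> (\<forall>p\<in>P. \<sigma> p = -1 \<or> \<sigma> p = 1) \<longrightarrow>
       (let w = 1 / (C0 * (ln (real n))\<^sup>2);
            R = sqrt (3 * ln (real n)) + 3;
            S0 = grid w \<inter> box_inf R;
            F = (\<lambda>x. \<bar>\<Sum>p\<in>P. \<sigma> p * exp (2 * (norm p)\<^sup>2) * exp (- (1/3) * (norm (x - 3 *\<^sub>R p))\<^sup>2)\<bar>)
        in (SUP x\<in>box_inf R. F x) \<le> 4 * (SUP s\<in>S0. F s) + 7))"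
proof -
  define d where "d = real CARD('n)"
  define c where "c = exp 3 * 2 * d * sqrt 3 + exp 3 * (12 * d + 3) + 2 * d + 1"
  define C0 where "C0 = 32 * d * (exp (2 * d) + 1)"
  have d: "d \<ge> 1" by (simp add: d_def)
  then have "c \<ge> 0" by (simp add: c_def)
  have "C0 > 0" using d by (simp add: C0_def add_pos_pos)
  moreover have "(SUP x\<in>box_inf R. \<bar>gauss_sum P \<sigma> x\<bar>) \<le> 4 * (SUP s\<in>grid w \<inter> box_inf R. \<bar>gauss_sum P \<sigma> s\<bar>) + 7"
    if "n \<ge> nat \<lceil>exp (c\<^sup>2)\<rceil>" "finite P" "card P = n" "P \<subseteq> box_inf 1" "\<forall>p\<in>P. \<sigma> p = -1 \<or> \<sigma> p = 1"
      and "R = sqrt (3 * ln (real n)) + 3" "w = 1 / (C0 * (ln (real n))\<^sup>2)"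
    for n and P :: "(real ^ 'n) set" and \<sigma> R w
  proof -
    have "exp (c\<^sup>2) \<le> n" using that(1) by linarith
    then have "c\<^sup>2 \<le> ln n" by (metis exp_gt_zero exp_le_cancel_iff exp_ln order_less_le_trans)
    then have "c \<le> sqrt (ln n)" using \<open>c \<ge> 0\<close> real_le_rsqrt by blast
    then show ?thesis
      using that unfolding c_def C0_def d_def by (intro SUP_abs_gauss_sum_le_grid) auto
  qed
  ultimately show ?thesis unfolding Let_def gauss_sum_def by blast
qed

end
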